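(* Let $X,Y$ be topological spaces, $U$ an abelian group, $f\colon[X,Y]\to U$ a map, and $\bar f\colon\mathbb Z[[X,Y]]\to U$ the homomorphism with $\bar f(e_w)=f(w)$. For $r\in\mathbb N$, the condition $\operatorname{ord}f\le r$ is equivalent to: $\bar f([A])=0$ for every $A\in\mathbb Z[C(X,Y)]$ with $\theta(A)>r$.
   Context: $\mathbb Z[S]$ is the free abelian group on a set $S$ with basis $e_x$. For $A=\sum m_ae_a\in\mathbb Z[C(X,Y)]$, $[A]=\sum m_ae_{[a]}\in\mathbb Z[[X,Y]]$, $A|_V=\sum m_ae_{a|_V}$, and $\theta(A)=\inf\{\#V:V\subset X\text{ finite},A|_V\ne0\}$. Order: let $E_r$ be the group of functions $(X\times Y)^r\to\mathbb Z$, $I_r(a)$ the characteristic function of $\Gamma_a^r$ ($\Gamma_a$ the graph of $a$), $D_r\subset E_r$ the subgroup generated by all $I_r(a)$; $\operatorname{ord}f$ is the infimum of $r\in\mathbb N$ such that there is a homomorphism $l\colon D_r\to U$ with $f([a])=l(I_r(a))$ for all $a\in C(X,Y)$. *)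

theory Defs
  imports "HOL-Analysis.Analysis"
begin

text \<open>Free abelian group Z[S]: finitely supported integer-valued functions with support in S.\<close>
definition ZZ :: "'s set \<Rightarrow> ('s \<Rightarrow> int) set" where
  "ZZ S = {A. finite {x. A x \<noteq> 0} \<and> {x. A x \<noteq> 0} \<subseteq> S}"

text \<open>Push-forward of a formal sum along a map g: sum m_a e_a |-> sum m_a e_(g a).\<close>
definition push :: "('s \<Rightarrow> 't) \<Rightarrow> ('s \<Rightarrow> int) \<Rightarrow> ('t \<Rightarrow> int)" where
  "push g A = (\<lambda>y. \<Sum>x | A x \<noteq> 0 \<and> g x = y. A x)"

definition zsmult :: "int \<Rightarrow> 'u::ab_group_add \<Rightarrow> 'u" where
  "zsmult k u = (if 0 \<le> k then (\<Sum>i<nat k. u) else - (\<Sum>i<nat (- k). u))"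

text \<open>C(X,Y): continuous maps, normalised to be extensional on the underlying space.\<close>
definition CM :: "'a topology \<Rightarrow> 'b topology \<Rightarrow> ('a \<Rightarrow> 'b) set" where
  "CM X Y = {a. continuous_map X Y a \<and> a \<in> extensional (topspace X)}"

definition hcls :: "'a topology \<Rightarrow> 'b topology \<Rightarrow> ('a \<Rightarrow> 'b) \<Rightarrow> ('a \<Rightarrow> 'b) set" where
  "hcls X Y a = {b \<in> CM X Y. homotopic_with (\<lambda>_. True) X Y a b}"

definition HC :: "'a topology \<Rightarrow> 'b topology \<Rightarrow> ('a \<Rightarrow> 'b) set set" where
  "HC X Y = hcls X Y ` CM X Y"

definition fbar :: "(('a \<Rightarrow> 'b) set \<Rightarrow> 'u::ab_group_add) \<Rightarrow> (('a \<Rightarrow> 'b) set \<Rightarrow> int) \<Rightarrow> 'u" where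
  "fbar f B = (\<Sum>w | B w \<noteq> 0. zsmult (B w) (f w))"

definition theta :: "'a topology \<Rightarrow> (('a \<Rightarrow> 'b) \<Rightarrow> int) \<Rightarrow> enat" where
  "theta X A = Inf {enat (card V) | V. V \<subseteq> topspace X \<and> finite V
                     \<and> push (\<lambda>a. restrict a V) A \<noteq> (\<lambda>_. 0)}"

text \<open>I_r(a): characteristic function of Gamma_a^r inside (X x Y)^r, the latter
  represented by lists of length r (value 0 elsewhere).\<close>
definition Ir :: "'a topology \<Rightarrow> nat \<Rightarrow> ('a \<Rightarrow> 'b) \<Rightarrow> (('a \<times> 'b) list \<Rightarrow> int)" where
  "Ir X r a = (\<lambda>xs. if length xs = r \<and> (\<forall>p\<in>set xs. fst p \<in> topspace X \<and> snd p = a (fst p))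
                     then 1 else 0)"

definition Dr :: "'a topology \<Rightarrow> 'b topology \<Rightarrow> nat \<Rightarrow> (('a \<times> 'b) list \<Rightarrow> int) set" where
  "Dr X Y r = {\<phi>. \<exists>A\<in>ZZ (CM X Y). \<phi> = (\<lambda>xs. \<Sum>a | A a \<noteq> 0. A a * Ir X r a xs)}"

definition ordf :: "'a topology \<Rightarrow> 'b topology \<Rightarrow> (('a \<Rightarrow> 'b) set \<Rightarrow> 'u::ab_group_add) \<Rightarrow> enat" where
  "ordf X Y f = Inf {enat r | r. \<exists>l :: (('a \<times> 'b) list \<Rightarrow> int) \<Rightarrow> 'u.
       (\<forall>\<phi>\<in>Dr X Y r. \<forall>\<psi>\<in>Dr X Y r. l (\<lambda>xs. \<phi> xs + \<psi> xs) = l \<phi> + l \<psi>)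
     \<and> (\<forall>a\<in>CM X Y. f (hcls X Y a) = l (Ir X r a))}"

end

theory Submission
  imports Defs "HOL-Library.Function_Algebras"
begin

text \<open>
  Both conditions are statements about the kernel of \<open>A \<mapsto> I\<^sub>r(A) = \<Sum> m\<^sub>a I\<^sub>r(a)\<close>.
  Evaluated at an \<open>r\<close>-tuple of points on the graph of a map \<open>a\<^sub>1\<close>, \<open>I\<^sub>r(A)\<close> is the
  coefficient of \<open>a\<^sub>1|\<^sub>V\<close> in \<open>A|\<^sub>V\<close>, \<open>V\<close> being the set of first coordinates.  Every \<open>V\<close> with
  \<open>#V \<le> r\<close> is contained in such a set (when \<open>X \<noteq> {}\<close>), and restriction to \<open>V\<close> factors
  through restriction to any larger set, so \<open>I\<^sub>r(A) = 0\<close> iff \<open>\<theta>(A) > r\<close>.  Now \<open>ord f \<le> r\<close>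
  says that the homomorphism \<open>A \<mapsto> fbar f [A]\<close> on \<open>\<int>[C(X,Y)]\<close> factors through
  \<open>A \<mapsto> I\<^sub>s(A)\<close> for some \<open>s \<le> r\<close>, and a homomorphism on a free abelian group factors through another
  one iff it vanishes on the kernel of the latter.
\<close>

lemma zsmult_0 [simp]: "zsmult 0 u = 0"
  by (simp add: zsmult_def)

lemma zsmult_1 [simp]: "zsmult 1 u = u"
  by (simp add: zsmult_def)

lemma zsmult_plus_1: "zsmult (k + 1) u = zsmult k u + u"
proof (cases "0 \<le> k")
  case True
  then have "nat (k + 1) = Suc (nat k)" by simp
  with True show ?thesis by (simp add: zsmult_def)
next
  case False
  show ?thesis
  proof (cases "k = -1")
    case True
    then show ?thesis by (simp add: zsmult_def)
  next
    case k: False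
    with False have "nat (- k) = Suc (nat (- (k + 1)))" by simp
    with False k show ?thesis by (simp add: zsmult_def)
  qed
qed

lemma zsmult_add: "zsmult (k + m) u = zsmult k u + zsmult m u"
proof (induction m rule: int_induct[where k = 0])
  case base
  then show ?case by simp
next
  case (step1 i)
  then show ?case by (metis add.assoc zsmult_plus_1)
next
  case (step2 i)
  then show ?case
    using zsmult_plus_1[of "k + (i - 1)" u] zsmult_plus_1[of "i - 1" u] by (simp add: algebra_simps)
qed

lemma zsmult_diff: "zsmult (k - m) u = zsmult k u - zsmult m u"
  using zsmult_add[of "k - m" m u] by (simp add: algebra_simps)

lemma zsmult_sum: "finite T \<Longrightarrow> zsmult (\<Sum>t\<in>T. g t) u = (\<Sum>t\<in>T. zsmult (g t) u)"
  by (induction T rule: finite_induct) (simp_all add: zsmult_add)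

lemma zsmult_int: "zsmult k (m :: int) = k * m"
  by (simp add: zsmult_def)

lemma sum_fun_apply: "sum g T x = (\<Sum>t\<in>T. g t x)"
  by (induction T rule: infinite_finite_induct) auto

lemma zsmult_fun_apply: "zsmult k \<phi> x = zsmult k (\<phi> x)"
  by (simp add: zsmult_def sum_fun_apply)

lemma ZZ_iff: "A \<in> ZZ S \<longleftrightarrow> finite {x. A x \<noteq> 0} \<and> {x. A x \<noteq> 0} \<subseteq> S"
  by (simp add: ZZ_def)

lemma ZZ_if_support_subset:
  assumes "A \<in> ZZ S" "B \<in> ZZ S" "{x. C x \<noteq> 0} \<subseteq> {x. A x \<noteq> 0} \<union> {x. B x \<noteq> 0}"
  shows "C \<in> ZZ S"
  using assms unfolding ZZ_iff by (meson finite_UnI finite_subset le_sup_iff order_trans)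

lemma ZZ_add: "A \<in> ZZ S \<Longrightarrow> B \<in> ZZ S \<Longrightarrow> (\<lambda>x. A x + B x) \<in> ZZ S"
  by (rule ZZ_if_support_subset[of A S B]) auto

lemma ZZ_diff: "A \<in> ZZ S \<Longrightarrow> B \<in> ZZ S \<Longrightarrow> (\<lambda>x. A x - B x) \<in> ZZ S"
  by (rule ZZ_if_support_subset[of A S B]) auto

lemma ZZ_single: "a \<in> S \<Longrightarrow> (\<lambda>x. if x = a then k else 0) \<in> ZZ S"
  unfolding ZZ_iff by (auto intro: finite_subset[of _ "{a}"])

definition lincomb :: "('s \<Rightarrow> 'u::ab_group_add) \<Rightarrow> ('s \<Rightarrow> int) \<Rightarrow> 'u" where
  "lincomb u A = (\<Sum>a | A a \<noteq> 0. zsmult (A a) (u a))"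

lemma fbar_eq_lincomb: "fbar f = lincomb f"
  by (simp add: fun_eq_iff fbar_def lincomb_def)

lemma lincomb_eq_sum:
  assumes "finite T" "{x. A x \<noteq> 0} \<subseteq> T"
  shows "lincomb u A = (\<Sum>a\<in>T. zsmult (A a) (u a))"
  unfolding lincomb_def by (rule sum.mono_neutral_left) (use assms in auto)

lemma lincomb_add:
  assumes "finite {x. A x \<noteq> 0}" "finite {x. B x \<noteq> 0}"
  shows "lincomb u (\<lambda>x. A x + B x) = lincomb u A + lincomb u B"
proof -
  let ?T = "{x. A x \<noteq> 0} \<union> {x. B x \<noteq> 0}"
  have "lincomb u (\<lambda>x. A x + B x) = (\<Sum>a\<in>?T. zsmult (A a + B a) (u a))"
    by (rule lincomb_eq_sum) (use assms in auto)
  also have "\<dots> = (\<Sum>a\<in>?T. zsmult (A a) (u a)) + (\<Sum>a\<in>?T. zsmult (B a) (u a))"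
    by (simp add: zsmult_add sum.distrib)
  also have "\<dots> = lincomb u A + lincomb u B"
    using assms by (simp add: lincomb_eq_sum[of ?T])
  finally show ?thesis .
qed

lemma lincomb_diff:
  assumes "finite {x. A x \<noteq> 0}" "finite {x. B x \<noteq> 0}"
  shows "lincomb u (\<lambda>x. A x - B x) = lincomb u A - lincomb u B"
proof -
  let ?T = "{x. A x \<noteq> 0} \<union> {x. B x \<noteq> 0}"
  have "lincomb u (\<lambda>x. A x - B x) = (\<Sum>a\<in>?T. zsmult (A a - B a) (u a))"
    by (rule lincomb_eq_sum) (use assms in auto)
  also have "\<dots> = (\<Sum>a\<in>?T. zsmult (A a) (u a)) - (\<Sum>a\<in>?T. zsmult (B a) (u a))"
    by (simp add: zsmult_diff sum_subtractf)
  also have "\<dots> = lincomb u A - lincomb u B"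
    using assms by (simp add: lincomb_eq_sum[of ?T])
  finally show ?thesis .
qed

lemma lincomb_single [simp]: "lincomb u (\<lambda>x. if x = a then k else 0) = zsmult k (u a)"
  by (subst lincomb_eq_sum[of "{a}"]) auto

lemma lincomb_cong: "(\<And>a. A a \<noteq> 0 \<Longrightarrow> u a = v a) \<Longrightarrow> lincomb u A = lincomb v A"
  unfolding lincomb_def by (rule sum.cong) auto

lemma lincomb_fun_apply: "lincomb u A x = (\<Sum>a | A a \<noteq> 0. A a * u a x)"
  by (simp add: lincomb_def sum_fun_apply zsmult_fun_apply zsmult_int)

lemma lincomb_push:
  assumes fin: "finite {x. A x \<noteq> 0}"
  shows "lincomb u (push g A) = lincomb (u \<circ> g) A"
proof -
  let ?S = "{x. A x \<noteq> 0}"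
  have push_eq: "push g A y = (\<Sum>x \<in> {x \<in> ?S. g x = y}. A x)" for y
    by (simp add: push_def)
  have "lincomb u (push g A) = (\<Sum>y\<in>g ` ?S. zsmult (push g A y) (u y))"
  proof (rule lincomb_eq_sum)
    show "{y. push g A y \<noteq> 0} \<subseteq> g ` ?S"
    proof
      fix y
      assume "y \<in> {y. push g A y \<noteq> 0}"
      show "y \<in> g ` ?S"
      proof (rule ccontr)
        assume "y \<notin> g ` ?S"
        then have "{x \<in> ?S. g x = y} = {}" by blast
        then have "push g A y = 0" by (simp only: push_eq sum.empty)
        with \<open>y \<in> {y. push g A y \<noteq> 0}\<close> show False by simp
      qed
    qed
  qed (use fin in auto)
  also have "\<dots> = (\<Sum>y\<in>g ` ?S. \<Sum>x \<in> {x \<in> ?S. g x = y}. zsmult (A x) (u (g x)))"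
    using fin by (auto simp: push_eq zsmult_sum intro!: sum.cong)
  also have "\<dots> = (\<Sum>x\<in>?S. zsmult (A x) (u (g x)))"
    by (rule sum.group) (use fin in auto)
  finally show ?thesis
    by (simp add: lincomb_def)
qed

definition add_subgroup :: "'w::ab_group_add set \<Rightarrow> bool" where
  "add_subgroup D \<longleftrightarrow> 0 \<in> D \<and> (\<forall>x\<in>D. \<forall>y\<in>D. x + y \<in> D) \<and> (\<forall>x\<in>D. - x \<in> D)"

definition additive_on :: "'w::ab_group_add set \<Rightarrow> ('w \<Rightarrow> 'u::ab_group_add) \<Rightarrow> bool" where
  "additive_on D l \<longleftrightarrow> (\<forall>x\<in>D. \<forall>y\<in>D. l (x + y) = l x + l y)"

lemma add_subgroup_sum:
  "add_subgroup D \<Longrightarrow> (\<And>t. t \<in> T \<Longrightarrow> g t \<in> D) \<Longrightarrow> sum g T \<in> D"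
  by (induction T rule: infinite_finite_induct) (auto simp: add_subgroup_def)

lemma additive_on_0:
  assumes "additive_on D l" "add_subgroup D"
  shows "l 0 = 0"
  using assms unfolding add_subgroup_def
  by (metis add.right_neutral add_left_imp_eq additive_on_def)

lemma additive_on_uminus:
  assumes "additive_on D l" "add_subgroup D" "x \<in> D"
  shows "l (- x) = - l x"
proof -
  have "- x \<in> D"
    using assms(2,3) by (simp add: add_subgroup_def)
  with assms(1,3) have "l (x + - x) = l x + l (- x)"
    unfolding additive_on_def by blast
  moreover have "l 0 = 0"
    using assms(1,2) by (rule additive_on_0)
  ultimately show ?thesis
    by (simp add: add_eq_0_iff)
qed

lemma additive_on_sum:
  assumes "additive_on D l" "add_subgroup D" "\<And>t. t \<in> T \<Longrightarrow> g t \<in> D"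
  shows "l (sum g T) = (\<Sum>t\<in>T. l (g t))"
  using assms(3)
proof (induction T rule: infinite_finite_induct)
  case (insert t T)
  have "sum g T \<in> D"
    using assms(2) insert.prems by (intro add_subgroup_sum) auto
  with assms(1) insert have "l (g t + sum g T) = l (g t) + l (sum g T)"
    unfolding additive_on_def by blast
  with insert show ?case by simp
qed (use additive_on_0[OF assms(1,2)] in simp_all)

lemma additive_on_zsmult:
  assumes "additive_on D l" "add_subgroup D" "x \<in> D"
  shows "l (zsmult k x) = zsmult k (l x)"
proof -
  have multiple: "l (\<Sum>i<n. x) = (\<Sum>i<n. l x)" for n :: nat
    using assms(3) by (intro additive_on_sum[OF assms(1,2)])
  show ?thesis
  proof (cases "0 \<le> k")
    case True
    then show ?thesis by (simp add: zsmult_def multiple)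
  next
    case False
    have "(\<Sum>i<nat (- k). x) \<in> D"
      using assms(2,3) by (rule add_subgroup_sum)
    with False show ?thesis
      by (simp add: zsmult_def multiple additive_on_uminus[OF assms(1,2)])
  qed
qed

lemma lincomb_image_add:
  assumes "A \<in> ZZ S" "B \<in> ZZ S"
  shows "lincomb v A + lincomb v B = lincomb v (\<lambda>x. A x + B x)"
  using assms by (simp add: ZZ_iff lincomb_add)

lemma lincomb_zero [simp]: "lincomb u (\<lambda>_. 0) = 0"
  by (simp add: lincomb_def)

lemma add_subgroup_lincomb_image: "add_subgroup (lincomb v ` ZZ S)"
proof -
  have zero: "(\<lambda>_. 0) \<in> ZZ S"
    by (simp add: ZZ_iff)
  have "- lincomb v A \<in> lincomb v ` ZZ S" if "A \<in> ZZ S" for A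
  proof
    show "- lincomb v A = lincomb v (\<lambda>x. 0 - A x)"
      using that lincomb_diff[of "\<lambda>_. 0" A v] by (simp add: ZZ_iff)
    show "(\<lambda>x. 0 - A x) \<in> ZZ S"
      using zero that by (rule ZZ_diff)
  qed
  moreover have "0 \<in> lincomb v ` ZZ S"
    using zero lincomb_zero by (metis image_eqI)
  ultimately show ?thesis
    unfolding add_subgroup_def by (auto simp: lincomb_image_add ZZ_add)
qed

lemma additive_on_lincomb:
  assumes l: "additive_on (lincomb v ` ZZ S) l" and A: "A \<in> ZZ S"
  shows "l (lincomb v A) = lincomb (l \<circ> v) A"
proof -
  have multiple_in: "zsmult k (v a) \<in> lincomb v ` ZZ S" if "a \<in> S" for a k
    using ZZ_single[OF that, of k] lincomb_single[of v a k] by (metis image_eqI)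
  have generator_in: "v a \<in> lincomb v ` ZZ S" if "a \<in> S" for a
    using multiple_in[OF that, of 1] by simp
  have "l (lincomb v A) = (\<Sum>a | A a \<noteq> 0. l (zsmult (A a) (v a)))"
    unfolding lincomb_def using A
    by (intro additive_on_sum[OF l add_subgroup_lincomb_image] multiple_in) (auto simp: ZZ_iff)
  also have "\<dots> = lincomb (l \<circ> v) A"
    unfolding lincomb_def using A
    by (intro sum.cong refl)
      (auto simp: ZZ_iff intro!: additive_on_zsmult[OF l add_subgroup_lincomb_image] generator_in)
  finally show ?thesis .
qed

lemma exists_additive_on_lincomb_image:
  assumes "\<And>A. A \<in> ZZ S \<Longrightarrow> lincomb v A = 0 \<Longrightarrow> lincomb u A = 0"
  shows "\<exists>l. additive_on (lincomb v ` ZZ S) l \<and> (\<forall>a\<in>S. l (v a) = u a)"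
proof -
  have well_defined: "lincomb u A = lincomb u B"
    if "A \<in> ZZ S" "B \<in> ZZ S" "lincomb v A = lincomb v B" for A B
  proof -
    have fin: "finite {x. A x \<noteq> 0}" "finite {x. B x \<noteq> 0}"
      using that by (simp_all add: ZZ_iff)
    have "lincomb u (\<lambda>x. A x - B x) = 0"
      using that fin by (intro assms ZZ_diff) (simp_all add: lincomb_diff)
    with fin show ?thesis
      by (simp add: lincomb_diff)
  qed
  define l where "l w = lincomb u (SOME A. A \<in> ZZ S \<and> lincomb v A = w)" for w
  have l_lincomb: "l (lincomb v A) = lincomb u A" if "A \<in> ZZ S" for A
  proof -
    let ?B = "SOME B. B \<in> ZZ S \<and> lincomb v B = lincomb v A"
    have "\<exists>B. B \<in> ZZ S \<and> lincomb v B = lincomb v A"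
      using that by blast
    then have "?B \<in> ZZ S \<and> lincomb v ?B = lincomb v A"
      by (rule someI_ex)
    then show ?thesis
      unfolding l_def using that well_defined by blast
  qed
  have "additive_on (lincomb v ` ZZ S) l"
    unfolding additive_on_def
  proof (intro ballI)
    fix x y
    assume "x \<in> lincomb v ` ZZ S" "y \<in> lincomb v ` ZZ S"
    then obtain A B where "A \<in> ZZ S" "B \<in> ZZ S" "x = lincomb v A" "y = lincomb v B"
      by blast
    then show "l (x + y) = l x + l y"
      by (simp add: lincomb_image_add l_lincomb ZZ_add)
  qed
  moreover have "l (v a) = u a" if "a \<in> S" for a
    using l_lincomb[OF ZZ_single[OF that, of 1]] by simp
  ultimately show ?thesis by blast
qed

lemma Dr_eq_lincomb_image: "Dr X Y r = lincomb (Ir X r) ` ZZ (CM X Y)"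
  unfolding Dr_def by (auto simp: fun_eq_iff lincomb_fun_apply)

lemma restrict_eq_restrict_iff: "restrict f A = restrict g A \<longleftrightarrow> (\<forall>x\<in>A. f x = g x)"
  by (auto simp: fun_eq_iff)

lemma Ir_apply_eq_restrict:
  assumes "Ir X r a1 xs \<noteq> 0"
  shows "Ir X r a xs = (if restrict a (fst ` set xs) = restrict a1 (fst ` set xs) then 1 else 0)"
proof -
  from assms have graph: "length xs = r" "\<forall>p\<in>set xs. fst p \<in> topspace X \<and> snd p = a1 (fst p)"
    by (auto simp: Ir_def split: if_splits)
  then have "(\<forall>p\<in>set xs. fst p \<in> topspace X \<and> snd p = a (fst p)) \<longleftrightarrow> (\<forall>x\<in>fst ` set xs. a x = a1 x)"
    by auto
  with graph show ?thesis
    by (simp add: Ir_def restrict_eq_restrict_iff)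
qed

lemma lincomb_Ir_apply:
  assumes "finite {a. A a \<noteq> 0}" "Ir X r a1 xs \<noteq> 0"
  shows "lincomb (Ir X r) A xs
           = push (\<lambda>a. restrict a (fst ` set xs)) A (restrict a1 (fst ` set xs))"
proof -
  let ?same = "\<lambda>a. restrict a (fst ` set xs) = restrict a1 (fst ` set xs)"
  have "lincomb (Ir X r) A xs = (\<Sum>a | A a \<noteq> 0. if ?same a then A a else 0)"
    by (auto simp: lincomb_fun_apply Ir_apply_eq_restrict[OF assms(2)] intro!: sum.cong)
  also have "\<dots> = (\<Sum>a \<in> {a \<in> {a. A a \<noteq> 0}. ?same a}. A a)"
    using assms(1) by (rule sum.inter_filter[symmetric])
  finally show ?thesis
    by (simp add: push_def)
qed

lemma theta_gt_iff:
  "enat r < theta X A \<longleftrightarrow>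
     (\<forall>V. V \<subseteq> topspace X \<and> finite V \<and> card V \<le> r \<longrightarrow> push (\<lambda>a. restrict a V) A = (\<lambda>_. 0))"
    (is "_ \<longleftrightarrow> ?vanish")
proof
  assume r: "enat r < theta X A"
  show ?vanish
  proof (intro allI impI, rule ccontr)
    fix V
    assume V: "V \<subseteq> topspace X \<and> finite V \<and> card V \<le> r"
      and "push (\<lambda>a. restrict a V) A \<noteq> (\<lambda>_. 0)"
    then have "theta X A \<le> enat (card V)"
      unfolding theta_def by (intro Inf_lower) auto
    moreover have "enat (card V) \<le> enat r"
      using V by simp
    ultimately show False
      using r by (meson leD order_trans)
  qed
next
  assume ?vanish
  then have "enat (Suc r) \<le> theta X A"
    unfolding theta_def by (intro Inf_greatest) force
  then show "enat r < theta X A"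
    by (simp add: Suc_ile_eq)
qed

lemma push_comp_eq_0:
  assumes fin: "finite {x. A x \<noteq> 0}" and push_0: "push g A = (\<lambda>_. 0)"
  shows "push (h \<circ> g) A = (\<lambda>_. 0)"
proof
  fix z
  let ?S = "{x. A x \<noteq> 0 \<and> h (g x) = z}"
  have "push (h \<circ> g) A z = sum A ?S"
    by (simp add: push_def)
  also have "\<dots> = (\<Sum>y\<in>g ` ?S. sum A {x \<in> ?S. g x = y})"
    using fin by (intro sum.group[symmetric]) auto
  also have "\<dots> = (\<Sum>y\<in>g ` ?S. push g A y)"
    unfolding push_def by (intro sum.cong refl arg_cong[where f = "sum A"]) auto
  also have "\<dots> = 0"
    by (simp add: push_0)
  finally show "push (h \<circ> g) A z = 0" .
qed

lemma push_restrict_eq_0_subset: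
  assumes "finite {x. A x \<noteq> 0}" "push (\<lambda>a. restrict a W) A = (\<lambda>_. 0)" "V \<subseteq> W"
  shows "push (\<lambda>a. restrict a V) A = (\<lambda>_. 0)"
proof -
  have restrict_V: "(\<lambda>b. restrict b V) \<circ> (\<lambda>a. restrict a W) = (\<lambda>a. restrict a V)"
    using assms(3) by (auto simp: fun_eq_iff Int_absorb2)
  show ?thesis
    by (subst restrict_V[symmetric]) (rule push_comp_eq_0[OF assms(1,2)])
qed

lemma exists_list_of_set_length:
  assumes "finite V" "card V \<le> n" "V \<noteq> {} \<or> n = 0"
  shows "\<exists>xs. set xs = V \<and> length xs = n"
proof -
  obtain ys where ys: "set ys = V" "distinct ys"
    using finite_distinct_list[OF assms(1)] by blast
  then have "length ys = card V"
    using distinct_card by fastforce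
  with assms ys show ?thesis
    by (cases "V = {}") (auto intro!: exI[of _ "ys @ replicate (n - length ys) (hd ys)"])
qed

lemma lincomb_Ir_eq_0_if_theta_gt:
  assumes fin: "finite {a. A a \<noteq> 0}" and theta: "enat r < theta X A"
  shows "lincomb (Ir X r) A = 0"
proof
  fix xs
  show "lincomb (Ir X r) A xs = 0 xs"
  proof (cases "\<exists>a1. Ir X r a1 xs \<noteq> 0")
    case True
    then obtain a1 where a1: "Ir X r a1 xs \<noteq> 0" ..
    then have "fst ` set xs \<subseteq> topspace X" "card (fst ` set xs) \<le> r"
      by (auto simp: Ir_def split: if_splits intro: card_image_le[THEN order_trans] card_length)
    with theta have "push (\<lambda>a. restrict a (fst ` set xs)) A = (\<lambda>_. 0)"
      by (simp add: theta_gt_iff)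
    with lincomb_Ir_apply[OF fin a1] show ?thesis
      by simp
  next
    case False
    then show ?thesis
      by (simp add: lincomb_fun_apply)
  qed
qed

lemma push_restrict_eq_0_if_lincomb_Ir_eq_0:
  assumes fin: "finite {a. A a \<noteq> 0}" and vanish: "lincomb (Ir X r) A = 0"
    and xs: "set xs \<subseteq> topspace X" "length xs = r"
  shows "push (\<lambda>a. restrict a (set xs)) A = (\<lambda>_. 0)"
proof
  fix b
  show "push (\<lambda>a. restrict a (set xs)) A b = 0"
  proof (cases "b \<in> range (\<lambda>a. restrict a (set xs))")
    case True
    then obtain a1 where b: "b = restrict a1 (set xs)" by blast
    define graph where "graph = map (\<lambda>x. (x, a1 x)) xs"
    have "Ir X r a1 graph \<noteq> 0" "fst ` set graph = set xs"
      using xs by (auto simp: graph_def Ir_def image_image)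
    with lincomb_Ir_apply[OF fin, of X r a1 graph] vanish b show ?thesis
      by simp
  next
    case False
    then have "{a. A a \<noteq> 0 \<and> restrict a (set xs) = b} = {}"
      by blast
    then show ?thesis
      by (simp only: push_def sum.empty)
  qed
qed

lemma theta_gt_if_lincomb_Ir_eq_0:
  assumes fin: "finite {a. A a \<noteq> 0}" and vanish: "lincomb (Ir X r) A = 0"
    and nondegenerate: "r = 0 \<or> topspace X \<noteq> {}"
  shows "enat r < theta X A"
  unfolding theta_gt_iff
proof (intro allI impI)
  fix V
  assume V: "V \<subseteq> topspace X \<and> finite V \<and> card V \<le> r"
  txt \<open>An empty \<open>V\<close> is enlarged to a singleton: no list of positive length enumerates it.\<close>
  obtain W where W: "V \<subseteq> W" "W \<subseteq> topspace X" "finite W" "card W \<le> r" "W \<noteq> {} \<or> r = 0"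
  proof (cases "V = {} \<and> r \<noteq> 0")
    case True
    with nondegenerate obtain x where "x \<in> topspace X" by blast
    with True show ?thesis
      by (intro that[of "{x}"]) auto
  qed (use V in auto)
  then obtain xs where "set xs = W" "length xs = r"
    using exists_list_of_set_length by blast
  with W fin vanish have "push (\<lambda>a. restrict a W) A = (\<lambda>_. 0)"
    using push_restrict_eq_0_if_lincomb_Ir_eq_0 by blast
  then show "push (\<lambda>a. restrict a V) A = (\<lambda>_. 0)"
    using fin W(1) push_restrict_eq_0_subset by blast
qed

lemma theta_gt_if_topspace_empty:
  assumes "topspace X = {}" "enat 0 < theta X A"
  shows "enat r < theta X A"
  using assms by (simp add: theta_gt_iff)

lemma ordf_le_iff:
  "ordf X Y f \<le> enat r \<longleftrightarrow>
     (\<exists>r'\<le>r. \<exists>l. additive_on (Dr X Y r') l \<and> (\<forall>a\<in>CM X Y. f (hcls X Y a) = l (Ir X r' a)))"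
proof -
  have ordf_eq: "ordf X Y f = Inf {enat r' | r'. \<exists>l. additive_on (Dr X Y r') l
                   \<and> (\<forall>a\<in>CM X Y. f (hcls X Y a) = l (Ir X r' a))}"
    by (simp add: ordf_def additive_on_def plus_fun_def)
  show ?thesis
  proof
    assume "ordf X Y f \<le> enat r"
    then have "ordf X Y f < enat (Suc r)"
      by (rule le_less_trans) simp
    then show "\<exists>r'\<le>r. \<exists>l. additive_on (Dr X Y r') l \<and> (\<forall>a\<in>CM X Y. f (hcls X Y a) = l (Ir X r' a))"
      unfolding ordf_eq Inf_less_iff by (fastforce simp: less_Suc_eq_le)
  next
    assume "\<exists>r'\<le>r. \<exists>l. additive_on (Dr X Y r') l \<and> (\<forall>a\<in>CM X Y. f (hcls X Y a) = l (Ir X r' a))"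
    then obtain r' where "r' \<le> r" and "ordf X Y f \<le> enat r'"
      unfolding ordf_eq by (blast intro: Inf_lower)
    then show "ordf X Y f \<le> enat r"
      by (simp add: order_trans)
  qed
qed

lemma fbar_push_hcls:
  "A \<in> ZZ (CM X Y) \<Longrightarrow> fbar f (push (hcls X Y) A) = lincomb (f \<circ> hcls X Y) A"
  by (simp add: ZZ_iff fbar_eq_lincomb lincomb_push)

lemma fbar_push_hcls_eq_0_if_ordf_le:
  assumes "ordf X Y f \<le> enat r" and A: "A \<in> ZZ (CM X Y)" and "enat r < theta X A"
  shows "fbar f (push (hcls X Y) A) = 0"
proof -
  obtain r' l where "r' \<le> r" and l: "additive_on (lincomb (Ir X r') ` ZZ (CM X Y)) l"
    and f_eq: "\<forall>a\<in>CM X Y. f (hcls X Y a) = l (Ir X r' a)"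
    using assms(1) by (auto simp: ordf_le_iff Dr_eq_lincomb_image)
  with assms(3) have "enat r' < theta X A"
    by (meson enat_ord_simps(1) le_less_trans)
  have "fbar f (push (hcls X Y) A) = lincomb (l \<circ> Ir X r') A"
    using A f_eq by (auto simp: ZZ_iff fbar_push_hcls intro!: lincomb_cong)
  also have "\<dots> = l (lincomb (Ir X r') A)"
    using l A by (simp add: additive_on_lincomb)
  also have "\<dots> = l 0"
    using A \<open>enat r' < theta X A\<close> by (simp add: ZZ_iff lincomb_Ir_eq_0_if_theta_gt)
  also have "\<dots> = 0"
    using l add_subgroup_lincomb_image by (rule additive_on_0)
  finally show ?thesis .
qed

lemma ordf_le_if_fbar_push_hcls_eq_0:
  assumes vanish: "\<And>A. A \<in> ZZ (CM X Y) \<Longrightarrow> enat r < theta X A \<Longrightarrow> fbar f (push (hcls X Y) A) = 0"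
  shows "ordf X Y f \<le> enat r"
proof -
  txt \<open>For \<open>X = {}\<close> and \<open>r > 0\<close> all \<open>I\<^sub>r(a)\<close> vanish, but then \<open>\<theta>(A) > 0\<close> already forces
    \<open>\<theta>(A) = \<infinity>\<close>, so order \<open>0\<close> is the witness.\<close>
  define r0 where "r0 = (if topspace X = {} then 0 else r)"
  have "lincomb (f \<circ> hcls X Y) A = 0" if A: "A \<in> ZZ (CM X Y)" and "lincomb (Ir X r0) A = 0" for A
  proof -
    have "enat r0 < theta X A"
      using that by (intro theta_gt_if_lincomb_Ir_eq_0) (auto simp: ZZ_iff r0_def)
    then have "enat r < theta X A"
      by (cases "topspace X = {}") (auto simp: r0_def theta_gt_if_topspace_empty)
    with vanish A show ?thesis
      by (simp add: fbar_push_hcls)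
  qed
  then have "\<exists>l. additive_on (lincomb (Ir X r0) ` ZZ (CM X Y)) l
                \<and> (\<forall>a\<in>CM X Y. l (Ir X r0 a) = (f \<circ> hcls X Y) a)"
    by (rule exists_additive_on_lincomb_image)
  then obtain l where l: "additive_on (Dr X Y r0) l"
    and f_eq: "\<forall>a\<in>CM X Y. l (Ir X r0 a) = f (hcls X Y a)"
    unfolding Dr_eq_lincomb_image comp_def by blast
  have "r0 \<le> r"
    by (simp add: r0_def)
  with l f_eq show ?thesis
    unfolding ordf_le_iff by (intro exI[of _ r0] conjI exI[of _ l]) auto
qed

theorem mainTheorem15:
  fixes X :: "'a topology" and Y :: "'b topology"
    and f :: "('a \<Rightarrow> 'b) set \<Rightarrow> 'u::ab_group_add" and r :: nat
  shows "ordf X Y f \<le> enat r \<longleftrightarrow>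
    (\<forall>A\<in>ZZ (CM X Y). theta X A > enat r \<longrightarrow> fbar f (push (hcls X Y) A) = 0)"
  using fbar_push_hcls_eq_0_if_ordf_le ordf_le_if_fbar_push_hcls_eq_0 by blast

end
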